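(* Assume (A1) and (A4). Let $\alpha\in\mathbb R\setminus\{1\}$, $\eta>0$, $\kappa$ with $(\alpha-1)\kappa\ge0$, $\kappa'\in\mathbb R$, and let $\mu\in\mathcal M_1(\mathsf T)$ satisfy $\Psi_\alpha(\mu)<\infty$ and $0<\mu\Big(\exp\Big(-\eta\frac{b_{\mu,\alpha}+1/(\alpha-1)}{(\alpha-1)(\mu(b_{\mu,\alpha})+\kappa)+1}\Big)\Big)<\infty$. Then (i) $\Psi_\alpha(\mathcal I^{AR}_\alpha(\mu))\le\Psi_\alpha(\mu)$; (ii) $\Psi_\alpha(\mathcal I^{AR}_\alpha(\mu))=\Psi_\alpha(\mu)$ if and only if $\mathcal I^{AR}_\alpha(\mu)=\mu$.
   Context: Let $(\mathsf Y,\mathcal Y,\nu)$ be a measure space with $\nu$ $\sigma$-finite, $(\mathsf T,\mathcal T)$ a measurable space, $\mathcal M_1(\mathsf T)$ its probability measures. Let $k:\mathsf T\times\mathsf Y\to[0,\infty)$ be measurable with $\int k(\theta,y)\nu(dy)=1$, $p$ measurable positive on $\mathsf Y$; $\mu k(y)=\int\mu(d\theta)k(\theta,y)$, $\mu(g)=\int g\,d\mu$. $f_0(u)=u-1-\log u$, $f_\alpha(u)=\frac{1}{\alpha(\alpha-1)}[u^\alpha-1-\alpha(u-1)]$ for $\alpha\notin\{0,1\}$, $f_\alpha'(u)=\frac{u^{\alpha-1}-1}{\alpha-1}$; $\Psi_\alpha(\mu)=\int f_\alpha(\mu k/p)p\,d\nu$; $b_{\mu,\alpha}(\theta)=\int k(\theta,y)f_\alpha'(\mu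 k(y)/p(y))\nu(dy)$. Assumption (A1): $k>0$, $p>0$ everywhere and $\int p\,d\nu<\infty$. Renyi Descent transition: $\mathcal I^{AR}_\alpha(\mu)(d\theta)=\frac{\mu(d\theta)\exp[-\eta\, b_{\mu,\alpha}(\theta)/((\alpha-1)(\mu(b_{\mu,\alpha})+\kappa)+1)]}{\mu(\exp[-\eta\, b_{\mu,\alpha}/((\alpha-1)(\mu(b_{\mu,\alpha})+\kappa)+1)])}$. $D^{AR}$ is an interval of $\mathbb R$ such that for all $\theta\in\mathsf T$, $\mu\in\mathcal M_1(\mathsf T)$, both $\frac{b_{\mu,\alpha}(\theta)+1/(\alpha-1)}{(\alpha-1)(\mu(b_{\mu,\alpha})+\kappa)+1}+\kappa'$ and $\frac{\mu(b_{\mu,\alpha})+1/(\alpha-1)}{(\alpha-1)(\mu(b_{\mu,\alpha})+\kappa)+1}+\kappa'$ lie in $D^{AR}$. Assumption (A4): $1-\eta(\alpha-1)(v-\kappa')\ge0$ for all $v\in D^{AR}$. *)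

theory Defs
  imports "HOL-Probability.Probability"
begin

definition f_alpha :: "real \<Rightarrow> real \<Rightarrow> real" where
  "f_alpha \<alpha> u = (if \<alpha> = 0 then u - 1 - ln u
                   else (u powr \<alpha> - 1 - \<alpha> * (u - 1)) / (\<alpha> * (\<alpha> - 1)))"

definition f_alpha' :: "real \<Rightarrow> real \<Rightarrow> real" where
  "f_alpha' \<alpha> u = (u powr (\<alpha> - 1) - 1) / (\<alpha> - 1)"

definition mix :: "'t measure \<Rightarrow> ('t \<Rightarrow> 'y \<Rightarrow> real) \<Rightarrow> 'y \<Rightarrow> real" where
  "mix \<mu> k y = (\<integral>\<theta>. k \<theta> y \<partial>\<mu>)"

definition Psi :: "'y measure \<Rightarrow> ('t \<Rightarrow> 'y \<Rightarrow> real) \<Rightarrow> ('y \<Rightarrow> real) \<Rightarrow> real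
                   \<Rightarrow> 't measure \<Rightarrow> ennreal" where
  "Psi \<nu> k p \<alpha> \<mu> = (\<integral>\<^sup>+ y. ennreal (f_alpha \<alpha> (mix \<mu> k y / p y) * p y) \<partial>\<nu>)"

definition bfun :: "'y measure \<Rightarrow> ('t \<Rightarrow> 'y \<Rightarrow> real) \<Rightarrow> ('y \<Rightarrow> real) \<Rightarrow> real
                   \<Rightarrow> 't measure \<Rightarrow> 't \<Rightarrow> real" where
  "bfun \<nu> k p \<alpha> \<mu> \<theta> = (\<integral>y. k \<theta> y * f_alpha' \<alpha> (mix \<mu> k y / p y) \<partial>\<nu>)"

definition mub :: "'y measure \<Rightarrow> ('t \<Rightarrow> 'y \<Rightarrow> real) \<Rightarrow> ('y \<Rightarrow> real) \<Rightarrow> real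
                   \<Rightarrow> 't measure \<Rightarrow> real" where
  "mub \<nu> k p \<alpha> \<mu> = (\<integral>\<theta>. bfun \<nu> k p \<alpha> \<mu> \<theta> \<partial>\<mu>)"

definition IAR :: "'y measure \<Rightarrow> ('t \<Rightarrow> 'y \<Rightarrow> real) \<Rightarrow> ('y \<Rightarrow> real) \<Rightarrow> real \<Rightarrow> real
                   \<Rightarrow> real \<Rightarrow> 't measure \<Rightarrow> 't measure" where
  "IAR \<nu> k p \<alpha> \<eta> \<kappa> \<mu> =
     (let w = (\<lambda>\<theta>. exp (- \<eta> * bfun \<nu> k p \<alpha> \<mu> \<theta>
                       / ((\<alpha> - 1) * (mub \<nu> k p \<alpha> \<mu> + \<kappa>) + 1)))
      in density \<mu> (\<lambda>\<theta>. ennreal (w \<theta> / (\<integral>\<theta>'. w \<theta>' \<partial>\<mu>))))"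

end

theory Submission
  imports Defs
begin

(* Write u = mu k / p, b = b_{mu,alpha}, beta = (alpha - 1) b + 1 >= 0, and let g = w / Z be the
   density of the updated measure mu' with respect to mu.  Jensen's inequality for the convex
   f_alpha, applied along the kernel, bounds f_alpha(mu' k / p) p by the mu-average of
   k f_alpha(g u) / u; splitting f_alpha(g u) = f_alpha(u) + u^alpha f_alpha(g) + u f_alpha'(u) (g - 1)
   and integrating with Fubini gives
     Psi(mu') <= Psi(mu) + integral of beta f_alpha(g) + b (g - 1) d mu.
   Since log w is affine in beta, normalisation forces g = exp(-r (beta - x0) / (alpha - 1)) for
   some x0 with 0 <= r x0 <= 1, where r beta <= 1 is the step-size condition (A4).  Using
   integral (g - 1) = 0, the integrand may be replaced by beta f_alpha(g) + (g - 1)(beta - x0)/(alpha - 1),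
   which is <= 0 pointwise, and < 0 where g <> 1, because x exp(-r x) increases on [0, 1/r]. *)


section \<open>The divergence generator\<close>

lemma sgn_exp_minus_one: "sgn (exp x - 1) = sgn (x::real)"
  by (cases "x = 0") (auto simp: sgn_if)

lemma sgn_exp_div_minus_one_div:
  fixes a t :: real
  assumes "a \<noteq> 0"
  shows "sgn ((exp (t / a) - 1) / a) = sgn t"
  using assms by (cases "a > 0") (auto simp: sgn_exp_minus_one sgn_mult)

lemma sgn_f_alpha':
  assumes "\<xi> > 0" "\<alpha> \<noteq> 1"
  shows "sgn (f_alpha' \<alpha> \<xi>) = sgn (\<xi> - 1)"
proof -
  have "f_alpha' \<alpha> \<xi> = (exp (((\<alpha> - 1)\<^sup>2 * ln \<xi>) / (\<alpha> - 1)) - 1) / (\<alpha> - 1)"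
    using assms by (simp add: f_alpha'_def powr_def power2_eq_square)
  also have "sgn \<dots> = sgn ((\<alpha> - 1)\<^sup>2 * ln \<xi>)"
    using assms by (intro sgn_exp_div_minus_one_div) simp
  also have "\<dots> = sgn (\<xi> - 1)"
    using assms by (cases "\<xi> < 1") (auto simp: sgn_mult sgn_if zero_less_mult_iff)
  finally show ?thesis .
qed

lemma borel_measurable_f_alpha [measurable]:
  assumes [measurable]: "h \<in> borel_measurable M"
  shows "(\<lambda>x. f_alpha \<alpha> (h x)) \<in> borel_measurable M"
  unfolding f_alpha_def by measurable

lemma borel_measurable_f_alpha' [measurable]:
  assumes [measurable]: "h \<in> borel_measurable M"
  shows "(\<lambda>x. f_alpha' \<alpha> (h x)) \<in> borel_measurable M"
  unfolding f_alpha'_def by measurable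

lemma f_alpha_one [simp]: "f_alpha \<alpha> 1 = 0"
  by (simp add: f_alpha_def)

lemma f_alpha_has_real_derivative:
  assumes "s > 0" "\<alpha> \<noteq> 1"
  shows "(f_alpha \<alpha> has_real_derivative f_alpha' \<alpha> s) (at s)"
proof (cases "\<alpha> = 0")
  case True
  have "f_alpha \<alpha> = (\<lambda>s. s - 1 - ln s)" "f_alpha' \<alpha> s = 1 - 1 / s"
    using True assms by (simp_all add: f_alpha_def f_alpha'_def powr_neg_one fun_eq_iff)
  then show ?thesis
    using assms by (auto intro!: derivative_eq_intros)
next
  case False
  have "f_alpha \<alpha> = (\<lambda>s. (s powr \<alpha> - 1 - \<alpha> * (s - 1)) / (\<alpha> * (\<alpha> - 1)))"
    using False by (simp add: f_alpha_def fun_eq_iff)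
  moreover have "f_alpha' \<alpha> s = (\<alpha> * s powr (\<alpha> - 1) - \<alpha>) / (\<alpha> * (\<alpha> - 1))"
    using False assms by (simp add: f_alpha'_def field_simps)
  ultimately show ?thesis
    using assms False by (auto intro!: derivative_eq_intros has_real_derivative_powr)
qed

lemma f_alpha_pos:
  assumes "s > 0" "s \<noteq> 1" "\<alpha> \<noteq> 1"
  shows "f_alpha \<alpha> s > 0"
proof (cases "s > 1")
  case True
  obtain z where "1 < z" "z < s" "f_alpha \<alpha> s - f_alpha \<alpha> 1 = (s - 1) * f_alpha' \<alpha> z"
    using MVT2[OF True, of "f_alpha \<alpha>" "f_alpha' \<alpha>"] f_alpha_has_real_derivative assms by force
  moreover have "f_alpha' \<alpha> z > 0"
    using sgn_f_alpha'[of z \<alpha>] \<open>1 < z\<close> assms by (simp add: sgn_if split: if_splits)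
  ultimately show ?thesis
    using True by simp
next
  case False
  then have "s < 1"
    using assms by simp
  then obtain z where "s < z" "z < 1" "f_alpha \<alpha> 1 - f_alpha \<alpha> s = (1 - s) * f_alpha' \<alpha> z"
    using MVT2[of s 1 "f_alpha \<alpha>" "f_alpha' \<alpha>"] f_alpha_has_real_derivative assms by force
  moreover have "f_alpha' \<alpha> z < 0"
    using sgn_f_alpha'[of z \<alpha>] \<open>s < z\<close> \<open>z < 1\<close> assms by (simp add: sgn_if split: if_splits)
  moreover have "(1 - s) * f_alpha' \<alpha> z < 0"
    using \<open>s < 1\<close> \<open>f_alpha' \<alpha> z < 0\<close> by (simp add: mult_pos_neg)
  ultimately show ?thesis
    by simp
qed

lemma f_alpha_nonneg:
  assumes "s > 0" "\<alpha> \<noteq> 1"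
  shows "f_alpha \<alpha> s \<ge> 0"
  using f_alpha_pos[of s \<alpha>] assms by (cases "s = 1") auto

lemma f_alpha_bregman:
  assumes "x > 0" "m > 0" "\<alpha> \<noteq> 1"
  shows "f_alpha \<alpha> x - f_alpha \<alpha> m - f_alpha' \<alpha> m * (x - m) = m powr \<alpha> * f_alpha \<alpha> (x / m)"
proof (cases "\<alpha> = 0")
  case True
  then show ?thesis
    using assms by (simp add: f_alpha_def f_alpha'_def powr_neg_one ln_div field_simps)
next
  case False
  have identity: "(X - 1 - \<alpha> * (x - 1)) / (\<alpha> * d) - (P - 1 - \<alpha> * (m - 1)) / (\<alpha> * d)
          - (P / m - 1) / d * (x - m)
        = P * ((X / P - 1 - \<alpha> * (x / m - 1)) / (\<alpha> * d))" if "P > 0" "d \<noteq> 0" for X P d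
    using False \<open>m > 0\<close> that by (simp add: field_simps)
  have "(x / m) powr \<alpha> = x powr \<alpha> / m powr \<alpha>" "m powr (\<alpha> - 1) = m powr \<alpha> / m"
    using assms by (simp_all add: powr_divide powr_diff)
  then show ?thesis
    using identity[of "m powr \<alpha>" "\<alpha> - 1" "x powr \<alpha>"] assms by (simp add: f_alpha_def f_alpha'_def False)
qed

lemma f_alpha_tangent_le:
  assumes "x > 0" "m > 0" "\<alpha> \<noteq> 1"
  shows "f_alpha \<alpha> m + f_alpha' \<alpha> m * (x - m) \<le> f_alpha \<alpha> x"
proof -
  have "0 \<le> m powr \<alpha> * f_alpha \<alpha> (x / m)"
    using f_alpha_nonneg[of "x / m" \<alpha>] assms by simp
  then show ?thesis
    using f_alpha_bregman[OF assms] by linarith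
qed

lemma f_alpha_tangent_less:
  assumes "x > 0" "m > 0" "x \<noteq> m" "\<alpha> \<noteq> 1"
  shows "f_alpha \<alpha> m + f_alpha' \<alpha> m * (x - m) < f_alpha \<alpha> x"
proof -
  have "0 < m powr \<alpha> * f_alpha \<alpha> (x / m)"
    using f_alpha_pos[of "x / m" \<alpha>] assms by simp
  then show ?thesis
    using f_alpha_bregman[of x m \<alpha>] assms by linarith
qed

lemma f_alpha_mult:
  assumes "u > 0" "g > 0" "\<alpha> \<noteq> 1"
  shows "f_alpha \<alpha> (g * u) = f_alpha \<alpha> u + u powr \<alpha> * f_alpha \<alpha> g + u * f_alpha' \<alpha> u * (g - 1)"
proof (cases "\<alpha> = 0")
  case True
  then show ?thesis
    using assms by (simp add: f_alpha_def f_alpha'_def powr_neg_one ln_mult field_simps)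
next
  case False
  have identity: "(G * U - 1 - \<alpha> * (g * u - 1)) / (\<alpha> * d)
        = (U - 1 - \<alpha> * (u - 1)) / (\<alpha> * d) + U * ((G - 1 - \<alpha> * (g - 1)) / (\<alpha> * d))
          + u * ((U / u - 1) / d) * (g - 1)" if "d \<noteq> 0" for G U d
    using False \<open>u > 0\<close> that by (simp add: field_simps)
  have "(g * u) powr \<alpha> = g powr \<alpha> * u powr \<alpha>" "u powr (\<alpha> - 1) = u powr \<alpha> / u"
    using assms by (simp_all add: powr_mult powr_diff)
  then show ?thesis
    using identity[of "\<alpha> - 1" "g powr \<alpha>" "u powr \<alpha>"] assms
    by (simp add: f_alpha_def f_alpha'_def False mult.commute)
qed

lemma f_alpha_bounded_Icc:
  assumes "0 < c" "\<alpha> \<noteq> 1"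
  obtains K where "\<And>x. c \<le> x \<Longrightarrow> x \<le> C \<Longrightarrow> \<bar>f_alpha \<alpha> x\<bar> \<le> K"
proof -
  have "continuous_on {c..C} (f_alpha \<alpha>)"
    using assms by (intro continuous_at_imp_continuous_on ballI DERIV_isCont[OF f_alpha_has_real_derivative]) auto
  then have "bounded (f_alpha \<alpha> ` {c..C})"
    by (intro compact_imp_bounded compact_continuous_image) auto
  then obtain K where "\<forall>z \<in> f_alpha \<alpha> ` {c..C}. norm z \<le> K"
    by (auto simp: bounded_iff)
  then show ?thesis
    by (intro that[of K]) auto
qed

section \<open>The pointwise gain of an exponential reweighting\<close>

lemma mult_exp_neg_mono:
  fixes r a b :: real
  assumes "r > 0" "0 \<le> a" "a \<le> b" "r * b \<le> 1"
  shows "a * exp (- r * a) \<le> b * exp (- r * b)"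
proof (rule DERIV_nonneg_imp_increasing_open[of a b "\<lambda>x. x * exp (- r * x)"])
  fix x assume "a < x" "x < b"
  have "((\<lambda>x. x * exp (- r * x)) has_real_derivative (exp (- r * x) * (1 - r * x))) (at x)"
    by (auto intro!: derivative_eq_intros simp: algebra_simps)
  moreover have "r * x \<le> r * b"
    using \<open>x < b\<close> \<open>r > 0\<close> by simp
  then have "r * x \<le> 1"
    using \<open>r * b \<le> 1\<close> by linarith
  ultimately show "\<exists>y. ((\<lambda>x. x * exp (- r * x)) has_real_derivative y) (at x) \<and> 0 \<le> y"
    by auto
next
  show "continuous_on {a..b} (\<lambda>x. x * exp (- r * x))"
    by (intro continuous_intros)
qed (fact \<open>a \<le> b\<close>)

lemma exp_weight_gain_nonpos:
  fixes \<alpha> r \<beta> x0 :: real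
  assumes "\<alpha> \<noteq> 1" "r > 0" "0 \<le> \<beta>" "r * \<beta> \<le> 1" "0 \<le> x0" "r * x0 \<le> 1"
  defines "g \<equiv> exp (- r * (\<beta> - x0) / (\<alpha> - 1))"
  shows "\<beta> * f_alpha \<alpha> g + (g - 1) * (\<beta> - x0) / (\<alpha> - 1) \<le> 0"
    and "g \<noteq> 1 \<Longrightarrow> \<beta> * f_alpha \<alpha> g + (g - 1) * (\<beta> - x0) / (\<alpha> - 1) < 0"
proof -
  (* The tangent of f_alpha at g, evaluated at 1, bounds the left-hand side by c (\<beta> E - x0);
     the two factors have opposite signs since x exp(-r x) increases on [0, 1/r]. *)
  define E where "E = exp (- r * (\<beta> - x0))"
  define c where "c = (g - 1) / (\<alpha> - 1)"
  have "g > 0"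
    by (simp add: g_def)
  have "g powr (\<alpha> - 1) = E"
    using assms(1) by (simp add: powr_def g_def E_def)
  then have f'_g: "f_alpha' \<alpha> g * (1 - g) = - (E - 1) * c"
    by (simp add: f_alpha'_def c_def algebra_simps)
  have f_g: "f_alpha \<alpha> g \<le> (E - 1) * c"
    using f_alpha_tangent_le[of 1 g \<alpha>] \<open>g > 0\<close> assms(1) f'_g by (simp add: algebra_simps)
  have "sgn c = sgn (- r * (\<beta> - x0))"
    unfolding c_def g_def using assms(1) by (intro sgn_exp_div_minus_one_div) simp
  then have sgn_c: "sgn c = sgn (x0 - \<beta>)"
    using \<open>r > 0\<close> by (simp add: sgn_mult sgn_minus[symmetric])
  have "\<beta> * E - x0 = exp (r * x0) * (\<beta> * exp (- r * \<beta>) - x0 * exp (- r * x0))"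
    by (simp add: E_def algebra_simps exp_add[symmetric] exp_diff)
  moreover have "x0 * exp (- r * x0) \<le> \<beta> * exp (- r * \<beta>)" if "x0 \<le> \<beta>"
    using mult_exp_neg_mono[of r x0 \<beta>] that assms by simp
  moreover have "\<beta> * exp (- r * \<beta>) \<le> x0 * exp (- r * x0)" if "\<beta> \<le> x0"
    using mult_exp_neg_mono[of r \<beta> x0] that assms by simp
  ultimately have "c * (\<beta> * E - x0) \<le> 0"
    using sgn_c by (cases "x0 \<le> \<beta>") (auto simp: sgn_if mult_le_0_iff split: if_splits)
  moreover have lhs_eq: "(g - 1) * (\<beta> - x0) / (\<alpha> - 1) = c * (\<beta> - x0)"
    by (simp add: c_def)
  moreover have "\<beta> * f_alpha \<alpha> g \<le> \<beta> * ((E - 1) * c)"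
    using f_g \<open>0 \<le> \<beta>\<close> by (rule mult_left_mono)
  ultimately show "\<beta> * f_alpha \<alpha> g + (g - 1) * (\<beta> - x0) / (\<alpha> - 1) \<le> 0"
    by (simp add: algebra_simps)
  assume "g \<noteq> 1"
  show "\<beta> * f_alpha \<alpha> g + (g - 1) * (\<beta> - x0) / (\<alpha> - 1) < 0"
  proof (cases "\<beta> = 0")
    case True
    then have "x0 \<noteq> 0"
      using \<open>g \<noteq> 1\<close> by (auto simp: g_def)
    then have "c > 0"
      using sgn_c True \<open>0 \<le> x0\<close> by (simp add: sgn_if split: if_splits)
    then show ?thesis
      using True \<open>0 \<le> x0\<close> \<open>x0 \<noteq> 0\<close> lhs_eq by simp
  next
    case False
    have "f_alpha \<alpha> g < (E - 1) * c"
      using f_alpha_tangent_less[of 1 g \<alpha>] \<open>g > 0\<close> \<open>g \<noteq> 1\<close> assms(1) f'_g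
      by (simp add: algebra_simps)
    then have "\<beta> * f_alpha \<alpha> g < \<beta> * ((E - 1) * c)"
      using False \<open>0 \<le> \<beta>\<close> by simp
    with \<open>c * (\<beta> * E - x0) \<le> 0\<close> show ?thesis
      unfolding lhs_eq by (simp add: algebra_simps)
  qed
qed

lemma exp_div_bounds:
  fixes a s t :: real
  assumes "a \<noteq> 0" "\<bar>s - t\<bar> \<le> 1"
  shows "exp (- 1 / \<bar>a\<bar>) \<le> exp (- (s - t) / a) \<and> exp (- (s - t) / a) \<le> exp (1 / \<bar>a\<bar>)"
proof -
  have "\<bar>- (s - t) / a\<bar> \<le> 1 / \<bar>a\<bar>"
    using assms by (simp add: abs_divide divide_right_mono)
  then show ?thesis
    using abs_le_D1 abs_le_D2 by fastforce
qed

lemma f_alpha_jensen: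
  fixes M :: "'a measure" and w x :: "'a \<Rightarrow> real"
  assumes "integrable M w" "integrable M (\<lambda>\<theta>. w \<theta> * x \<theta>)"
    and "integrable M (\<lambda>\<theta>. w \<theta> * f_alpha \<alpha> (x \<theta>))"
    and "\<And>\<theta>. \<theta> \<in> space M \<Longrightarrow> 0 \<le> w \<theta>" "\<And>\<theta>. \<theta> \<in> space M \<Longrightarrow> 0 < x \<theta>"
    and "(\<integral>\<theta>. w \<theta> \<partial>M) = 1" "\<alpha> \<noteq> 1"
  shows "f_alpha \<alpha> (\<integral>\<theta>. w \<theta> * x \<theta> \<partial>M) \<le> (\<integral>\<theta>. w \<theta> * f_alpha \<alpha> (x \<theta>) \<partial>M)"
proof -
  define m where "m = (\<integral>\<theta>. w \<theta> * x \<theta> \<partial>M)"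
  have "m \<noteq> 0"
  proof
    assume "m = 0"
    then have "AE \<theta> in M. w \<theta> * x \<theta> = 0"
      using integral_nonneg_eq_0_iff_AE[OF assms(2)] assms(4,5) by (simp add: m_def AE_I2 less_imp_le)
    then have "AE \<theta> in M. w \<theta> = 0"
      using AE_space by eventually_elim (use assms(5) in fastforce)
    then have "(\<integral>\<theta>. w \<theta> \<partial>M) = 0"
      by (simp add: integral_eq_zero_AE)
    with assms(6) show False
      by simp
  qed
  moreover have "m \<ge> 0"
    unfolding m_def using assms(4,5) by (simp add: integral_nonneg less_imp_le)
  ultimately have "m > 0"
    by simp
  have tangent_eq: "w \<theta> * (f_alpha \<alpha> m + f_alpha' \<alpha> m * (x \<theta> - m))
      = f_alpha \<alpha> m * w \<theta> + f_alpha' \<alpha> m * (w \<theta> * x \<theta>) - f_alpha' \<alpha> m * m * w \<theta>" for \<theta>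
    by (simp add: algebra_simps)
  have "(\<integral>\<theta>. w \<theta> * (f_alpha \<alpha> m + f_alpha' \<alpha> m * (x \<theta> - m)) \<partial>M)
      \<le> (\<integral>\<theta>. w \<theta> * f_alpha \<alpha> (x \<theta>) \<partial>M)"
  proof (rule integral_mono)
    show "integrable M (\<lambda>\<theta>. w \<theta> * (f_alpha \<alpha> m + f_alpha' \<alpha> m * (x \<theta> - m)))"
      unfolding tangent_eq using assms by simp
  qed (use assms \<open>m > 0\<close> in \<open>auto intro!: mult_left_mono f_alpha_tangent_le\<close>)
  also have "(\<integral>\<theta>. w \<theta> * (f_alpha \<alpha> m + f_alpha' \<alpha> m * (x \<theta> - m)) \<partial>M) = f_alpha \<alpha> m"
    using assms unfolding tangent_eq by (simp add: m_def)
  finally show ?thesis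
    unfolding m_def .
qed

lemma (in prob_space) integral_exp_div_mean_value:
  fixes s :: "'a \<Rightarrow> real"
  assumes "a \<noteq> 0" "s \<in> borel_measurable M" "\<And>\<theta>. \<theta> \<in> space M \<Longrightarrow> 0 \<le> s \<theta> \<and> s \<theta> \<le> 1"
  shows "\<exists>s0. 0 \<le> s0 \<and> s0 \<le> 1 \<and> (\<integral>\<theta>. exp (s \<theta> / a) \<partial>M) = exp (s0 / a)"
proof -
  define lo where "lo = min 0 (1 / a)"
  define hi where "hi = max 0 (1 / a)"
  define Z where "Z = (\<integral>\<theta>. exp (s \<theta> / a) \<partial>M)"
  have range: "exp lo \<le> exp (s \<theta> / a) \<and> exp (s \<theta> / a) \<le> exp hi" if "\<theta> \<in> space M" for \<theta>
    using assms(3)[OF that] \<open>a \<noteq> 0\<close>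
    by (cases "a > 0") (auto simp: lo_def hi_def divide_le_eq le_divide_eq)
  have integrable: "integrable M (\<lambda>\<theta>. exp (s \<theta> / a))"
    using range assms(2) by (intro integrable_const_bound[where B = "exp hi"]) (auto intro!: AE_I2)
  have "(\<integral>\<theta>. exp lo \<partial>M) \<le> Z" "Z \<le> (\<integral>\<theta>. exp hi \<partial>M)"
    unfolding Z_def by (rule integral_mono; use range integrable in simp)+
  then have "exp lo \<le> Z" "Z \<le> exp hi"
    by (simp_all add: prob_space)
  then have "Z > 0" "lo \<le> ln Z" "ln Z \<le> hi"
    using less_le_trans[OF exp_gt_zero] ln_ge_iff ln_le_cancel_iff[of Z "exp hi"] by auto
  moreover have "0 \<le> a * ln Z \<and> a * ln Z \<le> 1"
    using calculation \<open>a \<noteq> 0\<close>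
    by (cases "a > 0") (auto simp: lo_def hi_def le_divide_eq divide_le_eq mult_nonpos_nonpos mult.commute)
  ultimately show ?thesis
    using \<open>a \<noteq> 0\<close> by (intro exI[of _ "a * ln Z"]) (simp add: Z_def)
qed

section \<open>Mixtures of a positive kernel\<close>

locale kernel_mixture = \<nu>: sigma_finite_measure \<nu> + \<mu>: prob_space \<mu>
  for \<nu> :: "'y measure" and \<mu> :: "'t measure" +
  fixes k :: "'t \<Rightarrow> 'y \<Rightarrow> real" and p :: "'y \<Rightarrow> real" and \<alpha> :: real
  assumes k_measurable: "(\<lambda>(\<theta>, y). k \<theta> y) \<in> borel_measurable (\<mu> \<Otimes>\<^sub>M \<nu>)"
    and k_pos: "\<And>\<theta> y. 0 < k \<theta> y"
    and k_normalized: "\<And>\<theta>. \<theta> \<in> space \<mu> \<Longrightarrow> (\<integral>\<^sup>+ y. ennreal (k \<theta> y) \<partial>\<nu>) = 1"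
    and p_measurable [measurable]: "p \<in> borel_measurable \<nu>"
    and p_pos: "\<And>y. 0 < p y"
    and p_finite: "(\<integral>\<^sup>+ y. ennreal (p y) \<partial>\<nu>) < \<infinity>"
    and alpha: "\<alpha> \<noteq> 1"
begin

sublocale \<nu>\<mu>: pair_sigma_finite \<nu> \<mu> ..

abbreviation ratio :: "'y \<Rightarrow> real" where
  "ratio y \<equiv> mix \<mu> k y / p y"

abbreviation b :: "'t \<Rightarrow> real" where
  "b \<equiv> bfun \<nu> k p \<alpha> \<mu>"

abbreviation \<beta> :: "'t \<Rightarrow> real" where
  "\<beta> \<theta> \<equiv> (\<alpha> - 1) * b \<theta> + 1"

lemma k_measurable_prod [measurable]: "(\<lambda>x. k (fst x) (snd x)) \<in> borel_measurable (\<mu> \<Otimes>\<^sub>M \<nu>)"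
  using k_measurable by (simp add: case_prod_beta')

lemma k_measurable_swap [measurable]: "(\<lambda>x. k (snd x) (fst x)) \<in> borel_measurable (\<nu> \<Otimes>\<^sub>M \<mu>)"
  using measurable_pair_swap[OF k_measurable_prod] by simp

lemma k_measurable_fst [measurable]: "y \<in> space \<nu> \<Longrightarrow> (\<lambda>\<theta>. k \<theta> y) \<in> borel_measurable \<mu>"
  using measurable_compose[OF measurable_Pair2' k_measurable_prod] by simp

lemma k_measurable_snd [measurable]: "\<theta> \<in> space \<mu> \<Longrightarrow> k \<theta> \<in> borel_measurable \<nu>"
  using measurable_compose[OF measurable_Pair1' k_measurable_prod] by simp

lemma mix_measurable [measurable]: "mix \<mu> k \<in> borel_measurable \<nu>"
  unfolding mix_def[abs_def] by measurable

lemma b_measurable [measurable]: "b \<in> borel_measurable \<mu>"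
  unfolding bfun_def[abs_def] by measurable

lemma mix_nonneg: "0 \<le> mix \<mu> k y"
  unfolding mix_def using k_pos by (simp add: less_imp_le)

lemma k_integrable: "\<theta> \<in> space \<mu> \<Longrightarrow> integrable \<nu> (k \<theta>)"
  using k_normalized k_pos by (intro integrableI_nonneg) (auto simp: less_imp_le)

lemma k_integral: "\<theta> \<in> space \<mu> \<Longrightarrow> (\<integral>y. k \<theta> y \<partial>\<nu>) = 1"
  using nn_integral_eq_integral[OF k_integrable] k_normalized k_pos by (simp add: less_imp_le)

lemma nn_integral_k_mix: "(\<integral>\<^sup>+ y. (\<integral>\<^sup>+ \<theta>. ennreal (k \<theta> y) \<partial>\<mu>) \<partial>\<nu>) = 1"
proof -
  have "(\<integral>\<^sup>+ y. (\<integral>\<^sup>+ \<theta>. ennreal (k \<theta> y) \<partial>\<mu>) \<partial>\<nu>) = (\<integral>\<^sup>+ \<theta>. (\<integral>\<^sup>+ y. ennreal (k \<theta> y) \<partial>\<nu>) \<partial>\<mu>)"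
    by (rule \<nu>\<mu>.Fubini'[symmetric]) measurable
  also have "\<dots> = (\<integral>\<^sup>+ \<theta>. 1 \<partial>\<mu>)"
    using k_normalized by (intro nn_integral_cong) simp
  also have "\<dots> = 1"
    by (simp add: \<mu>.emeasure_space_1)
  finally show ?thesis .
qed

lemma AE_mix_pos:
  "AE y in \<nu>. integrable \<mu> (\<lambda>\<theta>. k \<theta> y) \<and> ennreal (mix \<mu> k y) = (\<integral>\<^sup>+ \<theta>. ennreal (k \<theta> y) \<partial>\<mu>)
     \<and> 0 < mix \<mu> k y"
proof -
  have "AE y in \<nu>. (\<integral>\<^sup>+ \<theta>. ennreal (k \<theta> y) \<partial>\<mu>) \<noteq> \<infinity>"
    using nn_integral_k_mix by (intro nn_integral_PInf_AE) auto
  with AE_space show ?thesis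
  proof eventually_elim
    case (elim y)
    have integrable: "integrable \<mu> (\<lambda>\<theta>. k \<theta> y)"
      using elim k_pos by (intro integrableI_nonneg) (auto simp: less_top less_imp_le)
    have "mix \<mu> k y \<noteq> 0"
    proof
      assume "mix \<mu> k y = 0"
      then have "AE \<theta> in \<mu>. k \<theta> y = 0"
        using integral_nonneg_eq_0_iff_AE[OF integrable] k_pos by (simp add: mix_def less_imp_le)
      then have "AE \<theta> in \<mu>. False"
      proof eventually_elim
        case (elim \<theta>)
        then show False
          using k_pos[of \<theta> y] by simp
      qed
      then show False
        by simp
    qed
    then have "0 < mix \<mu> k y"
      using mix_nonneg[of y] by (simp add: order_less_le)
    then show ?case
      using integrable nn_integral_eq_integral[OF integrable] k_pos by (simp add: mix_def less_imp_le)
  qed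
qed

lemma integrable_mix: "integrable \<nu> (mix \<mu> k)"
proof (rule integrableI_nonneg)
  have "(\<integral>\<^sup>+ y. ennreal (mix \<mu> k y) \<partial>\<nu>) = (\<integral>\<^sup>+ y. (\<integral>\<^sup>+ \<theta>. ennreal (k \<theta> y) \<partial>\<mu>) \<partial>\<nu>)"
    using AE_mix_pos by (intro nn_integral_cong_AE) auto
  then have "(\<integral>\<^sup>+ y. ennreal (mix \<mu> k y) \<partial>\<nu>) = 1"
    using nn_integral_k_mix by simp
  then show "(\<integral>\<^sup>+ y. ennreal (mix \<mu> k y) \<partial>\<nu>) < \<infinity>"
    by simp
qed (simp_all add: mix_nonneg)

lemma k_f_alpha'_ratio:
  "k \<theta> y * f_alpha' \<alpha> (ratio y) = (k \<theta> y * ratio y powr (\<alpha> - 1) - k \<theta> y) / (\<alpha> - 1)"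
  using alpha by (simp add: f_alpha'_def field_simps)

lemma beta_eq_integral:
  assumes "\<theta> \<in> space \<mu>" "integrable \<nu> (\<lambda>y. k \<theta> y * ratio y powr (\<alpha> - 1))"
  shows "\<beta> \<theta> = (\<integral>y. k \<theta> y * ratio y powr (\<alpha> - 1) \<partial>\<nu>)"
proof -
  have "b \<theta> = ((\<integral>y. k \<theta> y * ratio y powr (\<alpha> - 1) \<partial>\<nu>) - 1) / (\<alpha> - 1)"
    unfolding bfun_def k_f_alpha'_ratio using assms k_integrable k_integral by simp
  then show ?thesis
    using alpha by simp
qed

lemma beta_nonneg:
  assumes "\<theta> \<in> space \<mu>"
  shows "0 \<le> \<beta> \<theta>"
proof (cases "integrable \<nu> (\<lambda>y. k \<theta> y * ratio y powr (\<alpha> - 1))")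
  case True
  then show ?thesis
    using beta_eq_integral[OF assms] k_pos by (simp add: integral_nonneg less_imp_le)
next
  case False
  have "\<not> integrable \<nu> (\<lambda>y. k \<theta> y * f_alpha' \<alpha> (ratio y))"
  proof
    assume "integrable \<nu> (\<lambda>y. k \<theta> y * f_alpha' \<alpha> (ratio y))"
    then have "integrable \<nu> (\<lambda>y. (\<alpha> - 1) * (k \<theta> y * f_alpha' \<alpha> (ratio y)) + k \<theta> y)"
      using k_integrable[OF assms] by simp
    with False show False
      unfolding k_f_alpha'_ratio using alpha by simp
  qed
  then show ?thesis
    by (simp add: bfun_def not_integrable_integral_eq)
qed

lemma mub_nonneg: "0 \<le> (\<alpha> - 1) * mub \<nu> k p \<alpha> \<mu> + 1"
proof (cases "integrable \<mu> b")
  case True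
  then have "(\<alpha> - 1) * mub \<nu> k p \<alpha> \<mu> + 1 = (\<integral>\<theta>. \<beta> \<theta> \<partial>\<mu>)"
    by (simp add: mub_def \<mu>.prob_space)
  also have "\<dots> \<ge> 0"
    using beta_nonneg by (simp add: integral_nonneg)
  finally show ?thesis .
qed (simp add: mub_def not_integrable_integral_eq)

lemma integrable_p: "integrable \<nu> p"
  using p_finite p_pos by (intro integrableI_nonneg) (auto simp: less_imp_le)

lemma AE_ratio_pos: "AE y in \<nu>. 0 < ratio y"
  using AE_mix_pos by eventually_elim (simp add: p_pos)

lemma
  assumes "Psi \<nu> k p \<alpha> \<mu> < \<infinity>"
  shows integrable_Psi_integrand: "integrable \<nu> (\<lambda>y. f_alpha \<alpha> (ratio y) * p y)"
    and Psi_eq_integral: "Psi \<nu> k p \<alpha> \<mu> = ennreal (\<integral>y. f_alpha \<alpha> (ratio y) * p y \<partial>\<nu>)"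
proof -
  have nonneg: "AE y in \<nu>. 0 \<le> f_alpha \<alpha> (ratio y) * p y"
    using AE_ratio_pos by eventually_elim (simp add: f_alpha_nonneg alpha p_pos less_imp_le)
  show integrable: "integrable \<nu> (\<lambda>y. f_alpha \<alpha> (ratio y) * p y)"
    using assms nonneg by (intro integrableI_nonneg) (simp_all add: Psi_def)
  show "Psi \<nu> k p \<alpha> \<mu> = ennreal (\<integral>y. f_alpha \<alpha> (ratio y) * p y \<partial>\<nu>)"
    unfolding Psi_def by (rule nn_integral_eq_integral[OF integrable nonneg])
qed

lemma integrable_kernel_mult:
  assumes [measurable]: "c \<in> borel_measurable \<nu>" and "integrable \<nu> (\<lambda>y. mix \<mu> k y * \<bar>c y\<bar>)"
  shows "integrable (\<nu> \<Otimes>\<^sub>M \<mu>) (\<lambda>(y, \<theta>). k \<theta> y * c y)"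
proof (rule \<nu>\<mu>.Fubini_integrable)
  show "integrable \<nu> (\<lambda>y. \<integral>\<theta>. norm (case (y, \<theta>) of (y, \<theta>) \<Rightarrow> k \<theta> y * c y) \<partial>\<mu>)"
    using assms(2) by (simp add: abs_mult mix_def abs_of_pos[OF k_pos])
  show "AE y in \<nu>. integrable \<mu> (\<lambda>\<theta>. case (y, \<theta>) of (y, \<theta>) \<Rightarrow> k \<theta> y * c y)"
    using AE_mix_pos by eventually_elim simp
qed measurable

lemma integrable_kernel_powr:
  assumes "Psi \<nu> k p \<alpha> \<mu> < \<infinity>"
  shows "integrable (\<nu> \<Otimes>\<^sub>M \<mu>) (\<lambda>(y, \<theta>). k \<theta> y * ratio y powr (\<alpha> - 1))"
proof (rule integrable_kernel_mult)
  have "integrable \<nu> (\<lambda>y. \<alpha> * (\<alpha> - 1) * (f_alpha \<alpha> (ratio y) * p y) + (1 - \<alpha>) * p y + \<alpha> * mix \<mu> k y)"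
    using integrable_Psi_integrand[OF assms] integrable_mix integrable_p by auto
  then show "integrable \<nu> (\<lambda>y. mix \<mu> k y * \<bar>ratio y powr (\<alpha> - 1)\<bar>)"
  proof (rule integrable_cong_AE_imp)
    show "AE y in \<nu>. \<alpha> * (\<alpha> - 1) * (f_alpha \<alpha> (ratio y) * p y) + (1 - \<alpha>) * p y + \<alpha> * mix \<mu> k y
        = mix \<mu> k y * \<bar>ratio y powr (\<alpha> - 1)\<bar>"
      using AE_ratio_pos
    proof eventually_elim
      case (elim y)
      have "mix \<mu> k y * ratio y powr (\<alpha> - 1) = p y * ratio y powr \<alpha>"
        using elim p_pos[of y] by (simp add: powr_diff field_simps)
      then show ?case
        using elim p_pos[of y] alpha by (simp add: f_alpha_def field_simps)
    qed
  qed measurable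
qed measurable

lemma mix_density:
  assumes [measurable]: "g \<in> borel_measurable \<mu>" and "\<And>\<theta>. \<theta> \<in> space \<mu> \<Longrightarrow> 0 \<le> g \<theta>"
    and "y \<in> space \<nu>"
  shows "mix (density \<mu> (\<lambda>\<theta>. ennreal (g \<theta>))) k y = (\<integral>\<theta>. g \<theta> * k \<theta> y \<partial>\<mu>)"
  unfolding mix_def using assms by (subst integral_density) auto

lemma integrable_kernel_f_ratio:
  assumes "Psi \<nu> k p \<alpha> \<mu> < \<infinity>"
  shows "integrable (\<nu> \<Otimes>\<^sub>M \<mu>) (\<lambda>(y, \<theta>). k \<theta> y * (f_alpha \<alpha> (ratio y) / ratio y))"
proof (rule integrable_kernel_mult)
  show "integrable \<nu> (\<lambda>y. mix \<mu> k y * \<bar>f_alpha \<alpha> (ratio y) / ratio y\<bar>)"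
    using integrable_abs[OF integrable_Psi_integrand[OF assms]]
  proof (rule integrable_cong_AE_imp)
    show "AE y in \<nu>. \<bar>f_alpha \<alpha> (ratio y) * p y\<bar> = mix \<mu> k y * \<bar>f_alpha \<alpha> (ratio y) / ratio y\<bar>"
      using AE_mix_pos by eventually_elim (simp add: abs_mult abs_divide abs_of_pos p_pos)
  qed measurable
qed measurable

lemma integral_kernel_f_ratio:
  assumes "Psi \<nu> k p \<alpha> \<mu> < \<infinity>"
  shows "(\<integral>x. (\<lambda>(y, \<theta>). k \<theta> y * (f_alpha \<alpha> (ratio y) / ratio y)) x \<partial>(\<nu> \<Otimes>\<^sub>M \<mu>))
    = (\<integral>y. f_alpha \<alpha> (ratio y) * p y \<partial>\<nu>)"
proof -
  have "(\<integral>x. (\<lambda>(y, \<theta>). k \<theta> y * (f_alpha \<alpha> (ratio y) / ratio y)) x \<partial>(\<nu> \<Otimes>\<^sub>M \<mu>))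
      = (\<integral>y. (\<integral>\<theta>. k \<theta> y * (f_alpha \<alpha> (ratio y) / ratio y) \<partial>\<mu>) \<partial>\<nu>)"
    using \<nu>\<mu>.integral_fst'[OF integrable_kernel_f_ratio[OF assms]] by simp
  also have "\<dots> = (\<integral>y. f_alpha \<alpha> (ratio y) * p y \<partial>\<nu>)"
  proof (rule integral_cong_AE)
    show "AE y in \<nu>. (\<integral>\<theta>. k \<theta> y * (f_alpha \<alpha> (ratio y) / ratio y) \<partial>\<mu>) = f_alpha \<alpha> (ratio y) * p y"
      using AE_mix_pos by eventually_elim (simp add: mix_def p_pos less_imp_neq[symmetric])
  qed measurable
  finally show ?thesis .
qed

end

section \<open>Reweighting the mixing measure\<close>

(* The lower bound c > 0 keeps f_alpha(g) bounded, which matters for alpha <= 0. *)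
locale bounded_reweighting = kernel_mixture \<nu> \<mu> k p \<alpha>
  for \<nu> :: "'y measure" and \<mu> :: "'t measure" and k p \<alpha> +
  fixes g :: "'t \<Rightarrow> real" and c C :: real
  assumes Psi_finite: "Psi \<nu> k p \<alpha> \<mu> < \<infinity>"
    and g_measurable [measurable]: "g \<in> borel_measurable \<mu>"
    and c_pos: "0 < c"
    and g_bounds: "\<And>\<theta>. \<theta> \<in> space \<mu> \<Longrightarrow> c \<le> g \<theta> \<and> g \<theta> \<le> C"
    and g_integral: "(\<integral>\<theta>. g \<theta> \<partial>\<mu>) = 1"
begin

lemma g_pos: "\<theta> \<in> space \<mu> \<Longrightarrow> 0 < g \<theta>"
  using g_bounds c_pos by (meson less_le_trans)

lemma integrable_g: "integrable \<mu> g"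
  using g_bounds g_pos by (intro \<mu>.integrable_const_bound[where B = C]) (auto intro!: AE_I2 simp: less_imp_le)

lemma integrable_kernel_f_reweight:
  "integrable (\<nu> \<Otimes>\<^sub>M \<mu>) (\<lambda>(y, \<theta>). k \<theta> y * ratio y powr (\<alpha> - 1) * f_alpha \<alpha> (g \<theta>))"
proof -
  obtain K where K: "\<And>x. c \<le> x \<Longrightarrow> x \<le> C \<Longrightarrow> \<bar>f_alpha \<alpha> x\<bar> \<le> K"
    using f_alpha_bounded_Icc[OF c_pos alpha] by blast
  show ?thesis
  proof (rule Bochner_Integration.integrable_bound)
    show "integrable (\<nu> \<Otimes>\<^sub>M \<mu>) (\<lambda>x. K * (case x of (y, \<theta>) \<Rightarrow> k \<theta> y * ratio y powr (\<alpha> - 1)))"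
      using integrable_kernel_powr[OF Psi_finite] by simp
    show "AE x in \<nu> \<Otimes>\<^sub>M \<mu>. norm ((\<lambda>(y, \<theta>). k \<theta> y * ratio y powr (\<alpha> - 1) * f_alpha \<alpha> (g \<theta>)) x)
        \<le> norm (K * (case x of (y, \<theta>) \<Rightarrow> k \<theta> y * ratio y powr (\<alpha> - 1)))"
    proof (rule AE_I2, clarsimp simp: space_pair_measure)
      fix y \<theta> assume "\<theta> \<in> space \<mu>"
      have "\<bar>k \<theta> y * ratio y powr (\<alpha> - 1) * f_alpha \<alpha> (g \<theta>)\<bar>
          = k \<theta> y * ratio y powr (\<alpha> - 1) * \<bar>f_alpha \<alpha> (g \<theta>)\<bar>"
        using k_pos[of \<theta> y] by (simp add: abs_mult abs_of_pos)
      also have "\<dots> \<le> k \<theta> y * ratio y powr (\<alpha> - 1) * K"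
        using K g_bounds[OF \<open>\<theta> \<in> space \<mu>\<close>] k_pos[of \<theta> y] by (intro mult_left_mono) auto
      also have "\<dots> \<le> \<bar>K * (k \<theta> y * ratio y powr (\<alpha> - 1))\<bar>"
        by (metis abs_ge_self mult.commute)
      finally show "\<bar>k \<theta> y * ratio y powr (\<alpha> - 1) * f_alpha \<alpha> (g \<theta>)\<bar> \<le> \<bar>K * (k \<theta> y * ratio y powr (\<alpha> - 1))\<bar>" .
    qed
  qed measurable
qed

lemma integrable_kernel_f'_reweight:
  "integrable (\<nu> \<Otimes>\<^sub>M \<mu>) (\<lambda>(y, \<theta>). k \<theta> y * f_alpha' \<alpha> (ratio y) * (g \<theta> - 1))"
proof (rule Bochner_Integration.integrable_bound)
  let ?K = "(C + 1) / \<bar>\<alpha> - 1\<bar>"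
  have bound: "\<bar>k \<theta> y * f_alpha' \<alpha> (ratio y) * (g \<theta> - 1)\<bar>
      \<le> \<bar>?K * (k \<theta> y * ratio y powr (\<alpha> - 1) + k \<theta> y)\<bar>" if "\<theta> \<in> space \<mu>" for y \<theta>
  proof -
    have g_bound: "\<bar>g \<theta> - 1\<bar> \<le> C + 1"
      using g_bounds[OF that] g_pos[OF that] by (simp add: abs_le_iff)
    have f'_bound: "\<bar>f_alpha' \<alpha> (ratio y)\<bar> \<le> (ratio y powr (\<alpha> - 1) + 1) / \<bar>\<alpha> - 1\<bar>"
      unfolding f_alpha'_def abs_divide
      using powr_ge_zero[of "ratio y" "\<alpha> - 1"] by (intro divide_right_mono) (auto simp: abs_le_iff)
    have "\<bar>k \<theta> y * f_alpha' \<alpha> (ratio y) * (g \<theta> - 1)\<bar>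
        = k \<theta> y * \<bar>f_alpha' \<alpha> (ratio y)\<bar> * \<bar>g \<theta> - 1\<bar>"
      using k_pos[of \<theta> y] by (simp add: abs_mult abs_of_pos)
    also have "\<dots> \<le> k \<theta> y * ((ratio y powr (\<alpha> - 1) + 1) / \<bar>\<alpha> - 1\<bar>) * (C + 1)"
      using g_bound f'_bound k_pos[of \<theta> y] by (intro mult_mono mult_left_mono) auto
    also have "\<dots> = ?K * (k \<theta> y * ratio y powr (\<alpha> - 1) + k \<theta> y)"
      by (simp add: field_simps)
    finally show ?thesis
      by linarith
  qed
  show "integrable (\<nu> \<Otimes>\<^sub>M \<mu>)
      (\<lambda>x. ?K * ((case x of (y, \<theta>) \<Rightarrow> k \<theta> y * ratio y powr (\<alpha> - 1)) + (case x of (y, \<theta>) \<Rightarrow> k \<theta> y * 1)))"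
    using integrable_kernel_powr[OF Psi_finite] integrable_kernel_mult[of "\<lambda>_. 1"] integrable_mix by simp
  show "AE x in \<nu> \<Otimes>\<^sub>M \<mu>. norm ((\<lambda>(y, \<theta>). k \<theta> y * f_alpha' \<alpha> (ratio y) * (g \<theta> - 1)) x)
      \<le> norm (?K * ((case x of (y, \<theta>) \<Rightarrow> k \<theta> y * ratio y powr (\<alpha> - 1)) + (case x of (y, \<theta>) \<Rightarrow> k \<theta> y * 1)))"
    using bound by (auto intro!: AE_I2 simp: space_pair_measure)
qed measurable

definition reweighted_integrand :: "'y \<Rightarrow> 't \<Rightarrow> real" where
  "reweighted_integrand y \<theta> = k \<theta> y * (f_alpha \<alpha> (ratio y) / ratio y)
     + k \<theta> y * ratio y powr (\<alpha> - 1) * f_alpha \<alpha> (g \<theta>) + k \<theta> y * f_alpha' \<alpha> (ratio y) * (g \<theta> - 1)"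

lemma reweighted_integrand_eq:
  assumes "0 < ratio y" "\<theta> \<in> space \<mu>"
  shows "reweighted_integrand y \<theta> = k \<theta> y / ratio y * f_alpha \<alpha> (g \<theta> * ratio y)"
proof -
  define U where "U = ratio y"
  have "U > 0"
    using assms(1) by (simp add: U_def)
  have "k \<theta> y / U * f_alpha \<alpha> (g \<theta> * U)
      = k \<theta> y / U * (f_alpha \<alpha> U + U powr \<alpha> * f_alpha \<alpha> (g \<theta>) + U * f_alpha' \<alpha> U * (g \<theta> - 1))"
    using f_alpha_mult[OF \<open>U > 0\<close> g_pos[OF assms(2)] alpha] by simp
  also have "\<dots> = k \<theta> y * (f_alpha \<alpha> U / U) + k \<theta> y * U powr (\<alpha> - 1) * f_alpha \<alpha> (g \<theta>)
      + k \<theta> y * f_alpha' \<alpha> U * (g \<theta> - 1)"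
    using \<open>U > 0\<close> by (simp add: powr_diff field_simps)
  finally show ?thesis
    unfolding reweighted_integrand_def U_def[symmetric] ..
qed

lemma integrable_reweighted_integrand:
  "integrable (\<nu> \<Otimes>\<^sub>M \<mu>) (\<lambda>(y, \<theta>). reweighted_integrand y \<theta>)"
  using Bochner_Integration.integrable_add[OF Bochner_Integration.integrable_add[OF
      integrable_kernel_f_ratio[OF Psi_finite] integrable_kernel_f_reweight] integrable_kernel_f'_reweight]
  by (simp add: reweighted_integrand_def case_prod_beta')

lemma
  shows integrable_reweighting_gain: "integrable \<mu> (\<lambda>\<theta>. \<beta> \<theta> * f_alpha \<alpha> (g \<theta>) + b \<theta> * (g \<theta> - 1))"
    and integral_reweighted_integrand:
      "(\<integral>x. (\<lambda>(y, \<theta>). reweighted_integrand y \<theta>) x \<partial>(\<nu> \<Otimes>\<^sub>M \<mu>))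
        = (\<integral>y. f_alpha \<alpha> (ratio y) * p y \<partial>\<nu>) + (\<integral>\<theta>. \<beta> \<theta> * f_alpha \<alpha> (g \<theta>) + b \<theta> * (g \<theta> - 1) \<partial>\<mu>)"
proof -
  have inner2: "AE \<theta> in \<mu>. (\<integral>y. k \<theta> y * ratio y powr (\<alpha> - 1) * f_alpha \<alpha> (g \<theta>) \<partial>\<nu>) = \<beta> \<theta> * f_alpha \<alpha> (g \<theta>)"
    using \<nu>\<mu>.AE_integrable_snd[OF integrable_kernel_powr[OF Psi_finite]] AE_space
    by eventually_elim (simp add: beta_eq_integral)
  have inner3: "(\<integral>y. k \<theta> y * f_alpha' \<alpha> (ratio y) * (g \<theta> - 1) \<partial>\<nu>) = b \<theta> * (g \<theta> - 1)" for \<theta>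
    by (simp add: bfun_def)
  have int2: "integrable \<mu> (\<lambda>\<theta>. \<beta> \<theta> * f_alpha \<alpha> (g \<theta>))"
    using \<nu>\<mu>.integrable_snd[OF integrable_kernel_f_reweight]
  proof (rule integrable_cong_AE_imp)
    show "AE \<theta> in \<mu>. (\<integral>y. k \<theta> y * ratio y powr (\<alpha> - 1) * f_alpha \<alpha> (g \<theta>) \<partial>\<nu>) = \<beta> \<theta> * f_alpha \<alpha> (g \<theta>)"
      by (fact inner2)
  qed measurable
  have int3: "integrable \<mu> (\<lambda>\<theta>. b \<theta> * (g \<theta> - 1))"
    using \<nu>\<mu>.integrable_snd[OF integrable_kernel_f'_reweight] unfolding inner3 .
  show "integrable \<mu> (\<lambda>\<theta>. \<beta> \<theta> * f_alpha \<alpha> (g \<theta>) + b \<theta> * (g \<theta> - 1))"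
    using int2 int3 by simp
  have "(\<integral>x. (\<lambda>(y, \<theta>). k \<theta> y * ratio y powr (\<alpha> - 1) * f_alpha \<alpha> (g \<theta>)) x \<partial>(\<nu> \<Otimes>\<^sub>M \<mu>))
      = (\<integral>\<theta>. \<beta> \<theta> * f_alpha \<alpha> (g \<theta>) \<partial>\<mu>)"
    unfolding \<nu>\<mu>.integral_snd[OF integrable_kernel_f_reweight, symmetric]
    using inner2 by (intro integral_cong_AE) measurable
  moreover have "(\<integral>x. (\<lambda>(y, \<theta>). k \<theta> y * f_alpha' \<alpha> (ratio y) * (g \<theta> - 1)) x \<partial>(\<nu> \<Otimes>\<^sub>M \<mu>))
      = (\<integral>\<theta>. b \<theta> * (g \<theta> - 1) \<partial>\<mu>)"
    unfolding \<nu>\<mu>.integral_snd[OF integrable_kernel_f'_reweight, symmetric] inner3 ..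
  ultimately show "(\<integral>x. (\<lambda>(y, \<theta>). reweighted_integrand y \<theta>) x \<partial>(\<nu> \<Otimes>\<^sub>M \<mu>))
      = (\<integral>y. f_alpha \<alpha> (ratio y) * p y \<partial>\<nu>) + (\<integral>\<theta>. \<beta> \<theta> * f_alpha \<alpha> (g \<theta>) + b \<theta> * (g \<theta> - 1) \<partial>\<mu>)"
    using integrable_kernel_f_ratio[OF Psi_finite] integrable_kernel_f_reweight integrable_kernel_f'_reweight
      integral_kernel_f_ratio[OF Psi_finite] int2 int3
    by (simp add: reweighted_integrand_def case_prod_beta')
qed

lemma integrable_g_kernel:
  assumes "y \<in> space \<nu>" "integrable \<mu> (\<lambda>\<theta>. k \<theta> y)"
  shows "integrable \<mu> (\<lambda>\<theta>. g \<theta> * k \<theta> y)"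
proof (rule Bochner_Integration.integrable_bound)
  show "integrable \<mu> (\<lambda>\<theta>. C * k \<theta> y)"
    using assms(2) by simp
  show "AE \<theta> in \<mu>. norm (g \<theta> * k \<theta> y) \<le> norm (C * k \<theta> y)"
    using g_bounds g_pos k_pos
    by (intro AE_I2) (auto simp: abs_mult abs_of_pos intro!: mult_right_mono order_trans[OF _ abs_ge_self])
qed (use assms(1) in measurable)

lemma mix_density_pos:
  assumes "y \<in> space \<nu>" "integrable \<mu> (\<lambda>\<theta>. k \<theta> y)" "0 < mix \<mu> k y"
  shows "0 < mix (density \<mu> (\<lambda>\<theta>. ennreal (g \<theta>))) k y"
proof -
  have "(\<integral>\<theta>. c * k \<theta> y \<partial>\<mu>) \<le> (\<integral>\<theta>. g \<theta> * k \<theta> y \<partial>\<mu>)"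
  proof (rule integral_mono)
    show "c * k \<theta> y \<le> g \<theta> * k \<theta> y" if "\<theta> \<in> space \<mu>" for \<theta>
      using g_bounds[OF that] k_pos[of \<theta> y] by (simp add: mult_right_mono less_imp_le)
  qed (use integrable_g_kernel assms in simp_all)
  moreover have "0 < c * mix \<mu> k y"
    using c_pos assms(3) by simp
  ultimately show ?thesis
    using mix_density[of g y] g_pos assms(1) by (simp add: mix_def less_imp_le)
qed

lemma Psi_density_integrand_le:
  assumes "y \<in> space \<nu>" "integrable \<mu> (\<lambda>\<theta>. k \<theta> y)" "0 < mix \<mu> k y"
    and "integrable \<mu> (reweighted_integrand y)"
  defines "M' \<equiv> mix (density \<mu> (\<lambda>\<theta>. ennreal (g \<theta>))) k y"
  shows "f_alpha \<alpha> (M' / p y) * p y \<le> (\<integral>\<theta>. reweighted_integrand y \<theta> \<partial>\<mu>)"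
proof -
  define M where "M = mix \<mu> k y"
  define U where "U = ratio y"
  have "0 < p y" "0 < M" "0 < U" "M = p y * U"
    using p_pos[of y] assms(3) by (simp_all add: M_def U_def)
  have ri: "reweighted_integrand y \<theta> / p y = k \<theta> y / M * f_alpha \<alpha> (g \<theta> * U)" if "\<theta> \<in> space \<mu>" for \<theta>
    using reweighted_integrand_eq[OF _ that] \<open>0 < U\<close> \<open>M = p y * U\<close> by (simp add: U_def)
  have "f_alpha \<alpha> (\<integral>\<theta>. k \<theta> y / M * (g \<theta> * U) \<partial>\<mu>) \<le> (\<integral>\<theta>. k \<theta> y / M * f_alpha \<alpha> (g \<theta> * U) \<partial>\<mu>)"
  proof (rule f_alpha_jensen)
    have "(\<lambda>\<theta>. k \<theta> y / M * (g \<theta> * U)) = (\<lambda>\<theta>. U / M * (g \<theta> * k \<theta> y))"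
      by (simp add: fun_eq_iff)
    then show "integrable \<mu> (\<lambda>\<theta>. k \<theta> y / M * (g \<theta> * U))"
      using integrable_g_kernel[OF assms(1,2)] by simp
    have "integrable \<mu> (\<lambda>\<theta>. reweighted_integrand y \<theta> / p y)"
      using assms(4) by simp
    then show "integrable \<mu> (\<lambda>\<theta>. k \<theta> y / M * f_alpha \<alpha> (g \<theta> * U))"
      by (rule integrable_cong_AE_imp) (use ri assms(1) in \<open>auto intro!: AE_I2\<close>)
    show "0 < g \<theta> * U" if "\<theta> \<in> space \<mu>" for \<theta>
      using g_pos[OF that] \<open>0 < U\<close> by simp
    show "(\<integral>\<theta>. k \<theta> y / M \<partial>\<mu>) = 1"
      using \<open>0 < M\<close> by (simp add: M_def mix_def)
  qed (use assms(2) k_pos \<open>0 < M\<close> alpha in \<open>simp_all add: less_imp_le\<close>)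
  moreover have "(\<integral>\<theta>. k \<theta> y / M * (g \<theta> * U) \<partial>\<mu>) = M' / p y"
    using mix_density[of g y] g_pos assms(1) \<open>0 < M\<close> \<open>M = p y * U\<close> \<open>0 < U\<close>
    by (simp add: M'_def less_imp_le field_simps)
  moreover have "(\<integral>\<theta>. k \<theta> y / M * f_alpha \<alpha> (g \<theta> * U) \<partial>\<mu>) = (\<integral>\<theta>. reweighted_integrand y \<theta> / p y \<partial>\<mu>)"
    by (rule Bochner_Integration.integral_cong) (simp_all add: ri)
  ultimately have "f_alpha \<alpha> (M' / p y) \<le> (\<integral>\<theta>. reweighted_integrand y \<theta> \<partial>\<mu>) / p y"
    by simp
  then show ?thesis
    using \<open>0 < p y\<close> by (simp add: le_divide_eq)
qed

lemma
  shows Psi_density_le: "Psi \<nu> k p \<alpha> (density \<mu> (\<lambda>\<theta>. ennreal (g \<theta>)))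
      \<le> ennreal ((\<integral>y. f_alpha \<alpha> (ratio y) * p y \<partial>\<nu>) + (\<integral>\<theta>. \<beta> \<theta> * f_alpha \<alpha> (g \<theta>) + b \<theta> * (g \<theta> - 1) \<partial>\<mu>))"
    and Psi_density_bound_nonneg:
      "0 \<le> (\<integral>y. f_alpha \<alpha> (ratio y) * p y \<partial>\<nu>) + (\<integral>\<theta>. \<beta> \<theta> * f_alpha \<alpha> (g \<theta>) + b \<theta> * (g \<theta> - 1) \<partial>\<mu>)"
proof -
  let ?F = "\<lambda>y. f_alpha \<alpha> (mix (density \<mu> (\<lambda>\<theta>. ennreal (g \<theta>))) k y / p y) * p y"
  let ?I = "\<lambda>y. \<integral>\<theta>. reweighted_integrand y \<theta> \<partial>\<mu>"
  have bounds: "AE y in \<nu>. 0 \<le> ?F y \<and> ?F y \<le> ?I y"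
    using AE_mix_pos \<nu>\<mu>.AE_integrable_fst[OF integrable_reweighted_integrand] AE_space
    by eventually_elim (simp add: mix_density_pos f_alpha_nonneg alpha p_pos less_imp_le Psi_density_integrand_le)
  have "(\<integral>y. ?I y \<partial>\<nu>)
      = (\<integral>y. f_alpha \<alpha> (ratio y) * p y \<partial>\<nu>) + (\<integral>\<theta>. \<beta> \<theta> * f_alpha \<alpha> (g \<theta>) + b \<theta> * (g \<theta> - 1) \<partial>\<mu>)"
    using \<nu>\<mu>.integral_fst[OF integrable_reweighted_integrand] integral_reweighted_integrand by simp
  moreover have "AE y in \<nu>. 0 \<le> ?I y"
    using bounds by eventually_elim simp
  moreover have "AE y in \<nu>. ennreal (?F y) \<le> ennreal (?I y)"
    using bounds by eventually_elim (simp add: ennreal_leI)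
  then have "Psi \<nu> k p \<alpha> (density \<mu> (\<lambda>\<theta>. ennreal (g \<theta>))) \<le> (\<integral>\<^sup>+ y. ennreal (?I y) \<partial>\<nu>)"
    unfolding Psi_def by (rule nn_integral_mono_AE)
  ultimately show "Psi \<nu> k p \<alpha> (density \<mu> (\<lambda>\<theta>. ennreal (g \<theta>)))
      \<le> ennreal ((\<integral>y. f_alpha \<alpha> (ratio y) * p y \<partial>\<nu>) + (\<integral>\<theta>. \<beta> \<theta> * f_alpha \<alpha> (g \<theta>) + b \<theta> * (g \<theta> - 1) \<partial>\<mu>))"
    and "0 \<le> (\<integral>y. f_alpha \<alpha> (ratio y) * p y \<partial>\<nu>) + (\<integral>\<theta>. \<beta> \<theta> * f_alpha \<alpha> (g \<theta>) + b \<theta> * (g \<theta> - 1) \<partial>\<mu>)"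
    using nn_integral_eq_integral[OF \<nu>\<mu>.integrable_fst[OF integrable_reweighted_integrand]]
      integral_nonneg_AE by metis+
qed

lemma
  fixes x0 :: real
  defines "gain \<equiv> \<lambda>\<theta>. \<beta> \<theta> * f_alpha \<alpha> (g \<theta>) + (g \<theta> - 1) * (\<beta> \<theta> - x0) / (\<alpha> - 1)"
  assumes gain_nonpos: "\<And>\<theta>. \<theta> \<in> space \<mu> \<Longrightarrow> gain \<theta> \<le> 0"
  shows Psi_density_le_Psi: "Psi \<nu> k p \<alpha> (density \<mu> (\<lambda>\<theta>. ennreal (g \<theta>))) \<le> Psi \<nu> k p \<alpha> \<mu>"
    and Psi_density_eq_Psi_imp:
      "\<lbrakk>\<And>\<theta>. \<theta> \<in> space \<mu> \<Longrightarrow> g \<theta> \<noteq> 1 \<Longrightarrow> gain \<theta> < 0;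
        Psi \<nu> k p \<alpha> (density \<mu> (\<lambda>\<theta>. ennreal (g \<theta>))) = Psi \<nu> k p \<alpha> \<mu>\<rbrakk>
       \<Longrightarrow> density \<mu> (\<lambda>\<theta>. ennreal (g \<theta>)) = \<mu>"
proof -
  have gain_eq: "gain \<theta> = \<beta> \<theta> * f_alpha \<alpha> (g \<theta>) + b \<theta> * (g \<theta> - 1) + (1 - x0) / (\<alpha> - 1) * (g \<theta> - 1)" for \<theta>
    using alpha by (simp add: gain_def field_simps)
  have gain_integrable: "integrable \<mu> gain"
    unfolding gain_eq using integrable_reweighting_gain integrable_g by simp
  have "(\<integral>\<theta>. (1 - x0) / (\<alpha> - 1) * (g \<theta> - 1) \<partial>\<mu>) = 0"
    using integrable_g g_integral by (simp add: \<mu>.prob_space)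
  then have "(\<integral>\<theta>. gain \<theta> \<partial>\<mu>) = (\<integral>\<theta>. \<beta> \<theta> * f_alpha \<alpha> (g \<theta>) + b \<theta> * (g \<theta> - 1) \<partial>\<mu>)"
    unfolding gain_eq using integrable_reweighting_gain integrable_g by simp
  then have le: "Psi \<nu> k p \<alpha> (density \<mu> (\<lambda>\<theta>. ennreal (g \<theta>)))
      \<le> ennreal ((\<integral>y. f_alpha \<alpha> (ratio y) * p y \<partial>\<nu>) + (\<integral>\<theta>. gain \<theta> \<partial>\<mu>))"
    and nonneg: "0 \<le> (\<integral>y. f_alpha \<alpha> (ratio y) * p y \<partial>\<nu>) + (\<integral>\<theta>. gain \<theta> \<partial>\<mu>)"
    using Psi_density_le Psi_density_bound_nonneg by simp_all
  have "(\<integral>\<theta>. gain \<theta> \<partial>\<mu>) \<le> 0"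
    using integral_mono[OF gain_integrable, of "\<lambda>_. 0"] gain_nonpos by simp
  then show "Psi \<nu> k p \<alpha> (density \<mu> (\<lambda>\<theta>. ennreal (g \<theta>))) \<le> Psi \<nu> k p \<alpha> \<mu>"
    using le Psi_eq_integral[OF Psi_finite] by (metis add_le_same_cancel1 ennreal_leI order_trans)
  assume gain_neg: "\<And>\<theta>. \<theta> \<in> space \<mu> \<Longrightarrow> g \<theta> \<noteq> 1 \<Longrightarrow> gain \<theta> < 0"
    and "Psi \<nu> k p \<alpha> (density \<mu> (\<lambda>\<theta>. ennreal (g \<theta>))) = Psi \<nu> k p \<alpha> \<mu>"
  then have "(\<integral>y. f_alpha \<alpha> (ratio y) * p y \<partial>\<nu>) \<le> (\<integral>y. f_alpha \<alpha> (ratio y) * p y \<partial>\<nu>) + (\<integral>\<theta>. gain \<theta> \<partial>\<mu>)"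
    using le nonneg Psi_eq_integral[OF Psi_finite] by (simp add: ennreal_le_iff)
  then have "(\<integral>\<theta>. - gain \<theta> \<partial>\<mu>) = 0"
    using \<open>(\<integral>\<theta>. gain \<theta> \<partial>\<mu>) \<le> 0\<close> by simp
  then have "AE \<theta> in \<mu>. - gain \<theta> = 0"
    using integral_nonneg_eq_0_iff_AE[of \<mu> "\<lambda>\<theta>. - gain \<theta>"] gain_integrable gain_nonpos by auto
  then have "AE \<theta> in \<mu>. ennreal (g \<theta>) = 1"
    using AE_space by eventually_elim (use gain_neg in force)
  then have "density \<mu> (\<lambda>\<theta>. ennreal (g \<theta>)) = density \<mu> (\<lambda>_. 1)"
    by (rule density_cong[rotated 2]) measurable
  then show "density \<mu> (\<lambda>\<theta>. ennreal (g \<theta>)) = \<mu>"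
    by (simp add: density_1)
qed

end

context kernel_mixture
begin

lemma exp_weight_bounds:
  assumes "\<theta> \<in> space \<mu>" "0 < r" "0 \<le> x0" "r * x0 \<le> 1" "r * \<beta> \<theta> \<le> 1"
  shows "exp (- 1 / \<bar>\<alpha> - 1\<bar>) \<le> exp (- r * (\<beta> \<theta> - x0) / (\<alpha> - 1))
    \<and> exp (- r * (\<beta> \<theta> - x0) / (\<alpha> - 1)) \<le> exp (1 / \<bar>\<alpha> - 1\<bar>)"
proof -
  have "0 \<le> r * \<beta> \<theta>" "0 \<le> r * x0"
    using beta_nonneg[OF assms(1)] assms(2,3) by simp_all
  then have "\<bar>r * \<beta> \<theta> - r * x0\<bar> \<le> 1"
    using assms(4,5) by (simp add: abs_le_iff)
  then show ?thesis
    using exp_div_bounds[of "\<alpha> - 1" "r * \<beta> \<theta>" "r * x0"] alpha by (simp add: right_diff_distrib)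
qed

lemma Psi_exp_weight_descent:
  fixes r x0 :: real
  assumes Psi_finite: "Psi \<nu> k p \<alpha> \<mu> < \<infinity>"
    and "0 < r" "0 \<le> x0" "r * x0 \<le> 1" and r_beta: "\<And>\<theta>. \<theta> \<in> space \<mu> \<Longrightarrow> r * \<beta> \<theta> \<le> 1"
    and normalized: "(\<integral>\<theta>. exp (- r * (\<beta> \<theta> - x0) / (\<alpha> - 1)) \<partial>\<mu>) = 1"
  defines "\<mu>' \<equiv> density \<mu> (\<lambda>\<theta>. ennreal (exp (- r * (\<beta> \<theta> - x0) / (\<alpha> - 1))))"
  shows "Psi \<nu> k p \<alpha> \<mu>' \<le> Psi \<nu> k p \<alpha> \<mu>"
    and "Psi \<nu> k p \<alpha> \<mu>' = Psi \<nu> k p \<alpha> \<mu> \<Longrightarrow> \<mu>' = \<mu>"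
proof -
  define g where "g \<theta> = exp (- r * (\<beta> \<theta> - x0) / (\<alpha> - 1))" for \<theta>
  have "g \<in> borel_measurable \<mu>"
    unfolding g_def[abs_def] by measurable
  then interpret bounded_reweighting \<nu> \<mu> k p \<alpha> g "exp (- 1 / \<bar>\<alpha> - 1\<bar>)" "exp (1 / \<bar>\<alpha> - 1\<bar>)"
    using Psi_finite normalized exp_weight_bounds assms(2-4) r_beta by unfold_locales (simp_all add: g_def)
  have gain_nonpos: "\<beta> \<theta> * f_alpha \<alpha> (g \<theta>) + (g \<theta> - 1) * (\<beta> \<theta> - x0) / (\<alpha> - 1) \<le> 0"
    and gain_neg: "g \<theta> \<noteq> 1 \<Longrightarrow> \<beta> \<theta> * f_alpha \<alpha> (g \<theta>) + (g \<theta> - 1) * (\<beta> \<theta> - x0) / (\<alpha> - 1) < 0"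
    if "\<theta> \<in> space \<mu>" for \<theta>
    unfolding g_def using exp_weight_gain_nonpos[OF alpha \<open>0 < r\<close> beta_nonneg[OF that] r_beta[OF that] assms(3,4)]
    by simp_all
  show "Psi \<nu> k p \<alpha> \<mu>' \<le> Psi \<nu> k p \<alpha> \<mu>"
    using Psi_density_le_Psi[of x0] gain_nonpos by (simp add: \<mu>'_def g_def)
  show "\<mu>' = \<mu>" if "Psi \<nu> k p \<alpha> \<mu>' = Psi \<nu> k p \<alpha> \<mu>"
    using Psi_density_eq_Psi_imp[of x0] gain_nonpos gain_neg that by (simp add: \<mu>'_def g_def)
qed

lemma IAR_eq_exp_weight:
  fixes \<eta> \<kappa> :: real
  defines "\<gamma> \<equiv> (\<alpha> - 1) * (mub \<nu> k p \<alpha> \<mu> + \<kappa>) + 1"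
  defines "r \<equiv> \<eta> / \<gamma>"
  assumes "0 < \<gamma>" "0 < r" and r_beta: "\<And>\<theta>. \<theta> \<in> space \<mu> \<Longrightarrow> r * \<beta> \<theta> \<le> 1"
  obtains x0 where "0 \<le> x0" "r * x0 \<le> 1"
    and "(\<integral>\<theta>. exp (- r * (\<beta> \<theta> - x0) / (\<alpha> - 1)) \<partial>\<mu>) = 1"
    and "IAR \<nu> k p \<alpha> \<eta> \<kappa> \<mu> = density \<mu> (\<lambda>\<theta>. ennreal (exp (- r * (\<beta> \<theta> - x0) / (\<alpha> - 1))))"
proof -
  have "\<alpha> - 1 \<noteq> 0" "1 - \<alpha> \<noteq> 0"
    using alpha by simp_all
  obtain s0 where s0: "0 \<le> s0" "s0 \<le> 1" "(\<integral>\<theta>. exp (r * \<beta> \<theta> / (1 - \<alpha>)) \<partial>\<mu>) = exp (s0 / (1 - \<alpha>))"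
    using \<mu>.integral_exp_div_mean_value[of "1 - \<alpha>" "\<lambda>\<theta>. r * \<beta> \<theta>"] \<open>1 - \<alpha> \<noteq> 0\<close> r_beta beta_nonneg \<open>0 < r\<close>
    by (auto simp: zero_le_mult_iff)
  define w where "w \<theta> = exp (- \<eta> * b \<theta> / \<gamma>)" for \<theta>
  have w_eq: "w \<theta> = exp (r / (\<alpha> - 1)) * exp (r * \<beta> \<theta> / (1 - \<alpha>))" for \<theta>
  proof -
    have "r * (d * B + 1) / (- d) = - r * B - r / d" if "d \<noteq> 0" for d B
      using that by (simp add: field_simps)
    from this[OF \<open>\<alpha> - 1 \<noteq> 0\<close>, of "b \<theta>"]
    have "- \<eta> * b \<theta> / \<gamma> = r / (\<alpha> - 1) + r * \<beta> \<theta> / (1 - \<alpha>)"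
      by (simp add: r_def)
    then show ?thesis
      by (simp add: w_def exp_add[symmetric])
  qed
  have "w \<theta> / (\<integral>\<theta>. w \<theta> \<partial>\<mu>) = exp (- r * (\<beta> \<theta> - s0 / r) / (\<alpha> - 1))" for \<theta>
  proof -
    have "w \<theta> / (\<integral>\<theta>. w \<theta> \<partial>\<mu>) = exp (r * \<beta> \<theta> / (1 - \<alpha>) - s0 / (1 - \<alpha>))"
      unfolding w_eq by (simp add: s0(3) exp_diff)
    also have "r * \<beta> \<theta> / (1 - \<alpha>) - s0 / (1 - \<alpha>) = - (r * \<beta> \<theta> - s0) / (\<alpha> - 1)"
      by (simp add: diff_divide_distrib[symmetric] minus_diff_eq[symmetric, of \<alpha> 1] del: minus_diff_eq)
    also have "r * \<beta> \<theta> - s0 = r * (\<beta> \<theta> - s0 / r)"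
      using \<open>0 < r\<close> by (simp add: right_diff_distrib)
    finally show ?thesis
      by simp
  qed
  moreover have "(\<integral>\<theta>. w \<theta> / (\<integral>\<theta>. w \<theta> \<partial>\<mu>) \<partial>\<mu>) = 1"
    unfolding w_eq using s0(3) by simp
  ultimately show ?thesis
    using that[of "s0 / r"] s0 \<open>0 < r\<close>
    by (simp add: IAR_def Let_def w_def \<gamma>_def)
qed


lemma Psi_IAR_descent:
  fixes \<eta> \<kappa> :: real
  assumes Psi_finite: "Psi \<nu> k p \<alpha> \<mu> < \<infinity>" and "0 < \<eta>" and "0 \<le> (\<alpha> - 1) * \<kappa>"
    and step_size: "\<And>\<theta>. \<theta> \<in> space \<mu> \<Longrightarrow>
      \<eta> * (\<alpha> - 1) * ((b \<theta> + 1 / (\<alpha> - 1)) / ((\<alpha> - 1) * (mub \<nu> k p \<alpha> \<mu> + \<kappa>) + 1)) \<le> 1"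
  shows "Psi \<nu> k p \<alpha> (IAR \<nu> k p \<alpha> \<eta> \<kappa> \<mu>) \<le> Psi \<nu> k p \<alpha> \<mu>
    \<and> (Psi \<nu> k p \<alpha> (IAR \<nu> k p \<alpha> \<eta> \<kappa> \<mu>) = Psi \<nu> k p \<alpha> \<mu> \<longleftrightarrow> IAR \<nu> k p \<alpha> \<eta> \<kappa> \<mu> = \<mu>)"
proof -
  define \<gamma> where "\<gamma> = (\<alpha> - 1) * (mub \<nu> k p \<alpha> \<mu> + \<kappa>) + 1"
  have "0 \<le> \<gamma>"
    using mub_nonneg assms(3) by (simp add: \<gamma>_def algebra_simps)
  show ?thesis
  proof (cases "\<gamma> = 0")
    case True
    then have "IAR \<nu> k p \<alpha> \<eta> \<kappa> \<mu> = \<mu>"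
      by (simp add: IAR_def \<gamma>_def[symmetric] \<mu>.prob_space density_1)
    then show ?thesis
      by simp
  next
    case False
    define r where "r = \<eta> / \<gamma>"
    have "0 < \<gamma>" "0 < r"
      using False \<open>0 \<le> \<gamma>\<close> \<open>0 < \<eta>\<close> by (simp_all add: r_def)
    have r_beta: "r * \<beta> \<theta> \<le> 1" if "\<theta> \<in> space \<mu>" for \<theta>
    proof -
      have "(\<alpha> - 1) * (b \<theta> + 1 / (\<alpha> - 1)) = \<beta> \<theta>"
        using alpha by (simp add: distrib_left)
      moreover have "\<eta> * (\<alpha> - 1) * ((b \<theta> + 1 / (\<alpha> - 1)) / \<gamma>) = \<eta> * ((\<alpha> - 1) * (b \<theta> + 1 / (\<alpha> - 1))) / \<gamma>"
        by simp
      ultimately show ?thesis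
        using step_size[OF that] by (simp add: r_def \<gamma>_def[symmetric] mult.assoc)
    qed
    obtain x0 where "0 \<le> x0" "r * x0 \<le> 1"
      and "(\<integral>\<theta>. exp (- r * (\<beta> \<theta> - x0) / (\<alpha> - 1)) \<partial>\<mu>) = 1"
      and "IAR \<nu> k p \<alpha> \<eta> \<kappa> \<mu> = density \<mu> (\<lambda>\<theta>. ennreal (exp (- r * (\<beta> \<theta> - x0) / (\<alpha> - 1))))"
      using IAR_eq_exp_weight[of \<kappa> \<eta>] \<open>0 < \<gamma>\<close> \<open>0 < r\<close> r_beta unfolding r_def \<gamma>_def by blast
    then show ?thesis
      using Psi_exp_weight_descent[OF Psi_finite \<open>0 < r\<close> _ _ r_beta] by auto
  qed
qed

end

theorem mainTheorem8:
  fixes \<nu> :: "'y measure" and T :: "'t measure"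
    and k :: "'t \<Rightarrow> 'y \<Rightarrow> real" and p :: "'y \<Rightarrow> real"
    and \<alpha> \<eta> \<kappa> \<kappa>' :: real and \<mu> :: "'t measure" and D :: "real set"
  assumes sf: "sigma_finite_measure \<nu>"
    and k_meas: "(\<lambda>(\<theta>, y). k \<theta> y) \<in> borel_measurable (T \<Otimes>\<^sub>M \<nu>)"
    and k_int: "\<And>\<theta>. \<theta> \<in> space T \<Longrightarrow> (\<integral>\<^sup>+ y. ennreal (k \<theta> y) \<partial>\<nu>) = 1"
    and p_meas: "p \<in> borel_measurable \<nu>"
    and A1_k: "\<And>\<theta> y. k \<theta> y > 0"
    and A1_p: "\<And>y. p y > 0"
    and A1_pint: "(\<integral>\<^sup>+ y. ennreal (p y) \<partial>\<nu>) < \<infinity>"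
    and D_interval: "is_interval D"
    and D_mem: "\<And>\<mu>' \<theta>. prob_space \<mu>' \<Longrightarrow> sets \<mu>' = sets T \<Longrightarrow> \<theta> \<in> space T \<Longrightarrow>
         (bfun \<nu> k p \<alpha> \<mu>' \<theta> + 1 / (\<alpha> - 1)) / ((\<alpha> - 1) * (mub \<nu> k p \<alpha> \<mu>' + \<kappa>) + 1) + \<kappa>' \<in> D
       \<and> (mub \<nu> k p \<alpha> \<mu>' + 1 / (\<alpha> - 1)) / ((\<alpha> - 1) * (mub \<nu> k p \<alpha> \<mu>' + \<kappa>) + 1) + \<kappa>' \<in> D"
    and A4: "\<And>v. v \<in> D \<Longrightarrow> 1 - \<eta> * (\<alpha> - 1) * (v - \<kappa>') \<ge> 0"
    and alpha: "\<alpha> \<noteq> 1" and eta: "\<eta> > 0" and kappa: "(\<alpha> - 1) * \<kappa> \<ge> 0"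
    and mu_prob: "prob_space \<mu>" and mu_sets: "sets \<mu> = sets T"
    and Psi_fin: "Psi \<nu> k p \<alpha> \<mu> < \<infinity>"
    and Z_pos: "0 < (\<integral>\<^sup>+ \<theta>. ennreal (exp (- \<eta> * (bfun \<nu> k p \<alpha> \<mu> \<theta> + 1 / (\<alpha> - 1))
                    / ((\<alpha> - 1) * (mub \<nu> k p \<alpha> \<mu> + \<kappa>) + 1))) \<partial>\<mu>)"
    and Z_fin: "(\<integral>\<^sup>+ \<theta>. ennreal (exp (- \<eta> * (bfun \<nu> k p \<alpha> \<mu> \<theta> + 1 / (\<alpha> - 1))
                    / ((\<alpha> - 1) * (mub \<nu> k p \<alpha> \<mu> + \<kappa>) + 1))) \<partial>\<mu>) < \<infinity>"
  shows "Psi \<nu> k p \<alpha> (IAR \<nu> k p \<alpha> \<eta> \<kappa> \<mu>) \<le> Psi \<nu> k p \<alpha> \<mu>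
       \<and> (Psi \<nu> k p \<alpha> (IAR \<nu> k p \<alpha> \<eta> \<kappa> \<mu>) = Psi \<nu> k p \<alpha> \<mu> \<longleftrightarrow> IAR \<nu> k p \<alpha> \<eta> \<kappa> \<mu> = \<mu>)"
proof -
  have space_eq: "space \<mu> = space T"
    using mu_sets by (rule sets_eq_imp_space_eq)
  have "measurable (\<mu> \<Otimes>\<^sub>M \<nu>) (borel :: real measure) = measurable (T \<Otimes>\<^sub>M \<nu>) borel"
    using sets_pair_measure_cong[OF mu_sets refl] by (rule measurable_cong_sets) simp
  then have "(\<lambda>(\<theta>, y). k \<theta> y) \<in> borel_measurable (\<mu> \<Otimes>\<^sub>M \<nu>)"
    using k_meas by simp
  then interpret kernel_mixture \<nu> \<mu> k p \<alpha>
    using sf mu_prob k_int p_meas A1_k A1_p A1_pint alpha space_eq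
    by (simp add: kernel_mixture_def kernel_mixture_axioms_def)
  show ?thesis
  proof (rule Psi_IAR_descent[OF Psi_fin eta kappa])
    fix \<theta> assume "\<theta> \<in> space \<mu>"
    then show "\<eta> * (\<alpha> - 1) * ((b \<theta> + 1 / (\<alpha> - 1)) / ((\<alpha> - 1) * (mub \<nu> k p \<alpha> \<mu> + \<kappa>) + 1)) \<le> 1"
      using A4[OF conjunct1[OF D_mem[OF mu_prob mu_sets]]] space_eq by simp
  qed
qed

end
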